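(* Let $T(n)=(3n+1)/2^{v_2(3n+1)}$ be the Syracuse map. For odd $n$ let $L(n)=v_2(n+1)-1$. Fix $\ell\ge 0$. Among the odd positive integers $n$ with $L(n)=\ell$, the natural density (relative to that set) of those with $T^{\ell+1}(n)<n$ equals $$p_\ell=2^{-\lfloor(\log_2 3-1)(\ell+1)\rfloor}.$$
   Context: $v_2$ is the $2$-adic valuation; $T^j$ the $j$-th iterate. *)

theory Defs
  imports Complex_Main "HOL-Computational_Algebra.Primes"
begin

definition v2 :: "nat \<Rightarrow> nat" where
  "v2 m = multiplicity (2::nat) m"

definition syracuse :: "nat \<Rightarrow> nat" where
  "syracuse n = (3 * n + 1) div 2 ^ v2 (3 * n + 1)"

text \<open>L(n) = v2(n+1) - 1 (used for odd n, where v2(n+1) \<ge> 1)\<close>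
definition Lval :: "nat \<Rightarrow> nat" where
  "Lval n = v2 (n + 1) - 1"

definition has_rel_density :: "(nat \<Rightarrow> bool) \<Rightarrow> (nat \<Rightarrow> bool) \<Rightarrow> real \<Rightarrow> bool" where
  "has_rel_density P S d \<longleftrightarrow>
     ((\<lambda>N. real (card {n \<in> {1..N}. S n \<and> P n}) / real (card {n \<in> {1..N}. S n}))
        \<longlongrightarrow> d) sequentially"

end

theory Submission
  imports Defs "HOL-Number_Theory.Cong"
begin

(* Write n + 1 = 2^k m with k = l + 1, so that L(n) = l means that m is odd. Each of the
   first k - 1 steps of T multiplies n + 1 by 3/2, hence T^k(n) is the odd part of 3^k m - 1.
   For J = floor((log2 3 - 1) k) + 1 one has 2^(J+k-1) < 3^k < 2^(J+k), so as soon as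
   m >= 2^J, T^k(n) < n holds exactly when 2^J divides 3^k m - 1, i.e. when m lies in the
   residue class of 3^-k modulo 2^J, all of whose members are odd. That class has density
   2^-J and the odd numbers have density 1/2, so the relative density is 2^(1-J). *)

section \<open>The Syracuse map on 2^k m - 1\<close>

lemma v2_double: "y > 0 \<Longrightarrow> v2 (2 * y) = Suc (v2 y)"
  unfolding v2_def by (rule multiplicity_times_same) auto

lemma v2_odd: "odd y \<Longrightarrow> v2 y = 0"
  unfolding v2_def by (rule not_dvd_imp_multiplicity_0) auto

lemma syracuse_eq_div_power_v2:
  assumes "3 * x + 1 = 2 * y" "y > 0"
  shows "syracuse x = y div 2 ^ v2 y"
proof -
  have "syracuse x = (2 * y) div (2 * 2 ^ v2 y)"
    unfolding syracuse_def assms(1) using v2_double[OF assms(2)] by simp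
  also have "\<dots> = y div 2 ^ v2 y"
    by (rule div_mult_mult1) simp
  finally show ?thesis .
qed

lemma syracuse_iterate_plus_one:
  assumes "m > 0" "j < k"
  shows "(syracuse ^^ j) (2 ^ k * m - 1) + 1 = 3 ^ j * 2 ^ (k - j) * m"
  using assms(2)
proof (induction j)
  case 0
  then show ?case using assms(1) by simp
next
  case (Suc j)
  define x where "x = (syracuse ^^ j) (2 ^ k * m - 1)"
  define c where "c = 3 ^ Suc j * 2 ^ (k - Suc j) * m"
  have x: "x + 1 = 3 ^ j * 2 ^ (k - j) * m"
    using Suc by (simp add: x_def)
  have k_minus_j: "k - j = Suc (k - Suc j)"
    using Suc.prems by simp
  have "even c" "c > 0"
    using Suc.prems assms(1) by (simp_all add: c_def)
  then have c: "c - 1 + 1 = c" "odd (c - 1)"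
    by simp_all
  have "3 * x + 1 = 2 * (c - 1)"
    using x c(1) unfolding k_minus_j c_def by simp
  then have "syracuse x = c - 1"
    using syracuse_eq_div_power_v2[OF _ odd_pos[OF c(2)]] v2_odd[OF c(2)] by simp
  then show ?case
    using c(1) by (simp add: x_def c_def)
qed

lemma syracuse_iterate_eq_odd_part:
  assumes "m > 0" "k > 0"
  shows "(syracuse ^^ k) (2 ^ k * m - 1) = (3 ^ k * m - 1) div 2 ^ v2 (3 ^ k * m - 1)"
proof -
  obtain i where k: "k = Suc i"
    using assms(2) gr0_implies_Suc by blast
  define x where "x = (syracuse ^^ i) (2 ^ k * m - 1)"
  have "x + 1 = 3 ^ i * 2 * m"
    using syracuse_iterate_plus_one[OF assms(1), of i k] by (simp add: x_def k)
  moreover have "3 ^ k * m \<ge> 3"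
    using assms(1) by (simp add: k Suc_le_eq)
  ultimately have "3 * x + 1 = 2 * (3 ^ k * m - 1)" "3 ^ k * m - 1 > 0"
    by (simp_all add: k)
  then show ?thesis
    using syracuse_eq_div_power_v2 by (simp add: x_def k)
qed

lemma quotient_lt_if_large_divisor:
  fixes A B J m y p g :: nat
  assumes "p * g = y" "y + 1 = A * m" "A < 2 ^ J * B" "2 ^ J \<le> m" "2 ^ J \<le> p"
  shows "g + 1 < B * m"
proof -
  have "2 ^ J * (g + 1) \<le> p * g + 2 ^ J"
    using assms(5) by (simp add: algebra_simps mult_right_mono)
  also have "\<dots> < A * m + m"
    using assms(1,2,4) by simp
  also have "\<dots> \<le> 2 ^ J * B * m"
    using assms(3) by (metis Suc_leI add.commute mult_Suc mult_le_mono1)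
  finally have "2 ^ J * (g + 1) < 2 ^ J * (B * m)"
    by (simp add: mult.assoc)
  then show ?thesis
    by (metis mult_less_cancel1)
qed

lemma quotient_ge_if_small_divisor:
  fixes A B J m y p g :: nat
  assumes "p * g = y" "y + 1 = A * m" "2 ^ J * B < 2 * A" "m > 0" "p > 0" "2 * p \<le> 2 ^ J"
  shows "B * m \<le> g + 1"
proof (rule ccontr)
  assume "\<not> B * m \<le> g + 1"
  then have "2 * p * (g + 2) \<le> 2 ^ J * (B * m)"
    using assms(6) by (intro mult_le_mono) auto
  also have "\<dots> < 2 * A * m"
    using assms(3,4) by (simp add: mult.assoc[symmetric])
  finally show False
    using assms(1,2,5) by (simp add: algebra_simps)
qed

lemma odd_part_lt_iff:
  fixes A B J m :: nat
  assumes "2 ^ J * B < 2 * A" "A < 2 ^ J * B" "2 ^ J \<le> m"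
  shows "(A * m - 1) div 2 ^ v2 (A * m - 1) < B * m - 1 \<longleftrightarrow> 2 ^ J dvd A * m - 1"
proof -
  define y where "y = A * m - 1"
  define p where "p = (2::nat) ^ v2 y"
  define g where "g = y div p"
  have "m > 0"
    using less_le_trans[OF zero_less_power assms(3)] by simp
  have "A \<ge> 2"
    using assms(1,2) by linarith
  then have "2 * 1 \<le> A * m"
    using \<open>m > 0\<close> by (intro mult_le_mono) auto
  then have y: "y + 1 = A * m" "y > 0"
    unfolding y_def by simp_all
  have "p * g = y"
    unfolding p_def g_def v2_def using multiplicity_dvd[of "2::nat" y] by simp
  have dvd_iff: "2 ^ J dvd y \<longleftrightarrow> J \<le> v2 y"
    unfolding v2_def using y(2) by (simp add: power_dvd_iff_le_multiplicity)
  have "g < B * m - 1 \<longleftrightarrow> 2 ^ J dvd y"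
  proof (cases "J \<le> v2 y")
    case True
    then have "2 ^ J \<le> p"
      unfolding p_def by (simp add: power_increasing)
    then have "g + 1 < B * m"
      using quotient_lt_if_large_divisor[OF \<open>p * g = y\<close> y(1) assms(2,3)] by blast
    then show ?thesis
      using True dvd_iff by simp
  next
    case False
    then have "2 * p \<le> 2 ^ J"
      unfolding p_def by (metis Suc_leI not_le power_Suc power_increasing one_le_numeral)
    then have "B * m \<le> g + 1"
      using quotient_ge_if_small_divisor[OF \<open>p * g = y\<close> y(1) assms(1) \<open>m > 0\<close>] by (simp add: p_def)
    then show ?thesis
      using False dvd_iff by simp
  qed
  then show ?thesis
    unfolding g_def p_def y_def .
qed

lemma syracuse_iterate_lt_iff:
  fixes J k m :: nat
  assumes "(2::nat) ^ J * 2 ^ k < 2 * 3 ^ k" "(3::nat) ^ k < 2 ^ J * 2 ^ k" "2 ^ J \<le> m"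
  shows "(syracuse ^^ k) (2 ^ k * m - 1) < 2 ^ k * m - 1 \<longleftrightarrow> [3 ^ k * m = 1] (mod 2 ^ J)"
proof -
  have "m > 0"
    using less_le_trans[OF zero_less_power assms(3)] by simp
  have "k > 0"
    using assms(1,2) by (cases k) simp_all
  moreover have "3 ^ k * m \<ge> 1"
    using \<open>m > 0\<close> by (simp add: Suc_le_eq)
  ultimately show ?thesis
    using odd_part_lt_iff[OF assms] syracuse_iterate_eq_odd_part by (simp add: cong_altdef_nat)
qed

lemma three_power_between_powers_of_two:
  fixes k :: nat
  assumes "k > 0"
  defines "J \<equiv> nat \<lfloor>(log 2 3 - 1) * real k\<rfloor> + 1"
  shows "(2::nat) ^ J * 2 ^ k < 2 * 3 ^ k" "(3::nat) ^ k < 2 ^ J * 2 ^ k"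
proof -
  define F where "F = \<lfloor>(log 2 3 - 1) * real k\<rfloor>"
  have "log 2 3 > (1::real)"
    by (simp add: less_log_iff)
  then have "F \<ge> 0"
    unfolding F_def by simp
  have log_power: "log 2 (3 ^ k) = real k * log 2 (3::real)"
    by (simp add: log_nat_power)
  have "real (nat F + k) \<le> log 2 (3 ^ k)"
    using \<open>F \<ge> 0\<close> log_power of_int_floor_le[of "(log 2 3 - 1) * real k"]
    unfolding F_def by (simp add: algebra_simps)
  then have "2 powr real (nat F + k) \<le> 3 ^ k"
    by (subst (asm) le_log_iff) auto
  then have "real (2 ^ (nat F + k)) \<le> real (3 ^ k)"
    using powr_realpow[of 2 "nat F + k"] by simp
  then have "2 ^ (nat F + k) \<le> (3::nat) ^ k"
    by (simp only: of_nat_le_iff)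
  moreover have "even ((2::nat) ^ (nat F + k))" "odd ((3::nat) ^ k)"
    using \<open>k > 0\<close> by simp_all
  then have "2 ^ (nat F + k) \<noteq> (3::nat) ^ k"
    by metis
  ultimately have "2 ^ (nat F + k) < (3::nat) ^ k"
    by linarith
  then show "(2::nat) ^ J * 2 ^ k < 2 * 3 ^ k"
    unfolding J_def F_def[symmetric] by (simp add: power_add)
  have "log 2 (3 ^ k) < real (nat F + k + 1)"
    using \<open>F \<ge> 0\<close> log_power real_of_int_floor_add_one_gt[of "(log 2 3 - 1) * real k"]
    unfolding F_def by (simp add: algebra_simps)
  then have "3 ^ k < 2 powr real (nat F + k + 1)"
    by (subst (asm) log_less_iff) auto
  then have "real (3 ^ k) < real (2 ^ (nat F + k + 1))"
    using powr_realpow[of 2 "nat F + k + 1"] by simp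
  then show "(3::nat) ^ k < 2 ^ J * 2 ^ k"
    unfolding J_def F_def[symmetric] by (simp only: of_nat_less_iff power_add power_one_right mult_ac)
qed

section \<open>Densities of periodic sets\<close>

lemma periodic_add_mult:
  assumes "\<And>m. Q (m + p) = Q m"
  shows "Q (m + q * p) = Q (m::nat)"
proof (induction q)
  case (Suc q)
  have "m + Suc q * p = (m + q * p) + p"
    by simp
  then show ?case
    using Suc.IH assms by metis
qed simp

lemma card_periodic_below_mult:
  assumes "\<And>m. Q (m + p) = Q (m::nat)"
  shows "card {m. m < q * p \<and> Q m} = q * card {m. m < p \<and> Q m}"
proof (induction q)
  case (Suc q)
  let ?shift = "\<lambda>m. m + q * p"
  have split: "{m. m < Suc q * p \<and> Q m} = {m. m < q * p \<and> Q m} \<union> ?shift ` {m. m < p \<and> Q m}"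
  proof (intro equalityI subsetI)
    fix x
    assume x: "x \<in> {m. m < Suc q * p \<and> Q m}"
    show "x \<in> {m. m < q * p \<and> Q m} \<union> ?shift ` {m. m < p \<and> Q m}"
    proof (cases "x < q * p")
      case False
      then have "x = ?shift (x - q * p)" "x - q * p < p" "Q (x - q * p)"
        using x periodic_add_mult[where Q = Q, OF assms, of "x - q * p" q] by auto
      then show ?thesis
        by blast
    qed (use x in simp)
  qed (auto simp: periodic_add_mult[where Q = Q, OF assms])
  have "card (?shift ` {m. m < p \<and> Q m}) = card {m. m < p \<and> Q m}"
    by (rule card_image) (simp add: inj_on_def)
  moreover have "card ({m. m < q * p \<and> Q m} \<union> ?shift ` {m. m < p \<and> Q m})
      = card {m. m < q * p \<and> Q m} + card (?shift ` {m. m < p \<and> Q m})"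
    by (rule card_Un_disjoint) auto
  ultimately show ?case
    using split Suc.IH by simp
qed simp

lemma card_periodic_below_deviation:
  assumes "\<And>m. Q (m + p) = Q (m::nat)" "p > 0"
  defines "k \<equiv> card {m. m < p \<and> Q m}"
  shows "\<bar>real (card {m. m < M \<and> Q m}) - real k * real M / real p\<bar> \<le> real k"
proof -
  define q where "q = M div p"
  have q: "q * p \<le> M" "M < Suc q * p"
    unfolding q_def mult_Suc using div_mult_mod_eq[of M p] mod_less_divisor[OF assms(2), of M] by linarith+
  have "card {m. m < q * p \<and> Q m} \<le> card {m. m < M \<and> Q m}"
    by (rule card_mono) (use q(1) in auto)
  then have "q * k \<le> card {m. m < M \<and> Q m}"
    unfolding k_def card_periodic_below_mult[where Q = Q, OF assms(1)] .
  moreover have "card {m. m < M \<and> Q m} \<le> card {m. m < Suc q * p \<and> Q m}"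
    by (rule card_mono) (use q(2) in auto)
  then have "card {m. m < M \<and> Q m} \<le> Suc q * k"
    unfolding k_def card_periodic_below_mult[where Q = Q, OF assms(1)] .
  moreover have "real q \<le> real M / real p" "real M / real p \<le> real q + 1"
    using q assms(2) by (simp_all add: field_simps flip: of_nat_mult)
  then have "real k * real q \<le> real k * real M / real p" "real k * real M / real p \<le> real k * (real q + 1)"
    by (simp_all add: mult_left_mono flip: times_divide_eq_right)
  ultimately show ?thesis
    by (simp add: abs_le_iff algebra_simps flip: of_nat_mult of_nat_le_iff)
qed

lemma tendsto_ratio_bounded_diff:
  fixes c d :: "nat \<Rightarrow> real"
  assumes "\<And>M. \<bar>c M - d M\<bar> \<le> C" "(\<lambda>M. d M / real M) \<longlonglongrightarrow> a"
  shows "(\<lambda>M. c M / real M) \<longlonglongrightarrow> a"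
proof -
  have "norm ((c M - d M) / real M) \<le> norm (1 / real M) * C" for M
    using assms(1)[of M] by (simp add: abs_divide divide_right_mono)
  then have "(\<lambda>M. (c M - d M) / real M) \<longlonglongrightarrow> 0"
    by (intro tendsto_0_le[OF lim_1_over_n] always_eventually allI)
  from tendsto_add[OF this assms(2)] show ?thesis
    by (simp add: diff_divide_distrib)
qed

lemma periodic_density:
  assumes "\<And>m. Q (m + p) = Q (m::nat)" "p > 0"
  shows "(\<lambda>M. card {m. m < M \<and> Q m} / real M) \<longlonglongrightarrow> card {m. m < p \<and> Q m} / real p"
proof (rule tendsto_ratio_bounded_diff)
  let ?k = "real (card {m. m < p \<and> Q m})"
  show "\<bar>real (card {m. m < M \<and> Q m}) - ?k * real M / real p\<bar> \<le> ?k" for M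
    using card_periodic_below_deviation[where Q = Q, OF assms] .
  have "\<forall>\<^sub>F M in sequentially. ?k * real M / real p / real M = ?k / real p"
    by (rule eventually_sequentiallyI[of 1]) simp
  then show "(\<lambda>M. ?k * real M / real p / real M) \<longlonglongrightarrow> ?k / real p"
    by (rule tendsto_eventually)
qed

lemma density_eventually_eq:
  assumes "\<And>m. N \<le> m \<Longrightarrow> P m \<longleftrightarrow> Q m"
    and "(\<lambda>M. card {m. m < M \<and> Q m} / real M) \<longlonglongrightarrow> a"
  shows "(\<lambda>M. card {m. m < M \<and> P m} / real M) \<longlonglongrightarrow> a"
proof (rule tendsto_ratio_bounded_diff[OF _ assms(2)])
  have card_le: "card {m. m < M \<and> R m} \<le> N + card {m. m < M \<and> S m}"
    if "\<And>m. N \<le> m \<Longrightarrow> R m \<longleftrightarrow> S m" for R S :: "nat \<Rightarrow> bool" and M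
  proof -
    have "{m. m < M \<and> R m} \<subseteq> {..<N} \<union> {m. m < M \<and> S m}"
      using that by (auto simp: not_less)
    then have "card {m. m < M \<and> R m} \<le> card ({..<N} \<union> {m. m < M \<and> S m})"
      by (rule card_mono[rotated]) simp
    also have "\<dots> \<le> N + card {m. m < M \<and> S m}"
      using card_Un_le[of "{..<N}"] by simp
    finally show ?thesis .
  qed
  show "\<bar>real (card {m. m < M \<and> P m}) - real (card {m. m < M \<and> Q m})\<bar> \<le> real N" for M
    using card_le[of P Q M] card_le[of Q P M] assms(1) by (force simp: abs_le_iff)
qed

lemma tendsto_ratio_of_densities:
  fixes c d :: "nat \<Rightarrow> real"
  assumes "(\<lambda>M. c M / real M) \<longlonglongrightarrow> a" "(\<lambda>M. d M / real M) \<longlonglongrightarrow> b" "b \<noteq> 0"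
  shows "(\<lambda>M. c M / d M) \<longlonglongrightarrow> a / b"
proof -
  have "\<forall>\<^sub>F M in sequentially. (c M / real M) / (d M / real M) = c M / d M"
    by (rule eventually_sequentiallyI[of 1]) (simp add: divide_divide_times_eq)
  then show ?thesis
    using tendsto_divide[OF assms] by (rule Lim_transform_eventually[rotated])
qed

lemma card_inverses_below:
  fixes a n :: nat
  assumes "coprime a n" "n > 0"
  shows "card {m. m < n \<and> [a * m = 1] (mod n)} = 1"
proof -
  obtain x where x: "x < n" "[a * x = 1] (mod n)"
    using coprime_iff_invertible'_nat[OF assms(2)] assms(1) by auto
  have "{m. m < n \<and> [a * m = 1] (mod n)} = {x}"
  proof (intro equalityI subsetI)
    fix z
    assume "z \<in> {m. m < n \<and> [a * m = 1] (mod n)}"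
    then have "z < n" "[a * z = a * x] (mod n)"
      using x(2) by (auto intro: cong_trans cong_sym)
    then show "z \<in> {x}"
      using cong_mult_lcancel_nat[OF assms(1)] cong_less_modulus_unique_nat x(1) by auto
  qed (use x in simp)
  then show ?thesis
    by simp
qed

lemma odd_if_cong_one_mod_power2:
  fixes a m :: nat
  assumes "[a * m = 1] (mod 2 ^ J)" "J > 0"
  shows "odd m"
proof -
  have "[a * m = 1] (mod 2)"
    using assms(1) by (rule cong_dvd_modulus_nat) (use assms(2) in \<open>simp add: dvd_power\<close>)
  then show ?thesis
    by (auto simp: cong_def)
qed

lemma density_odd: "(\<lambda>M. card {m::nat. m < M \<and> odd m} / real M) \<longlonglongrightarrow> 1 / 2"
proof -
  have "{m::nat. m < 2 \<and> odd m} = {1}"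
    by (auto simp: less_2_cases_iff)
  then show ?thesis
    using periodic_density[of odd 2] by simp
qed

lemma density_cong_one:
  fixes a n :: nat
  assumes "coprime a n" "n > 0"
  shows "(\<lambda>M. card {m. m < M \<and> [a * m = 1] (mod n)} / real M) \<longlonglongrightarrow> 1 / real n"
proof -
  have "[a * (m + n) = 1] (mod n) \<longleftrightarrow> [a * m = 1] (mod n)" for m
    unfolding cong_def by (simp add: distrib_left)
  then show ?thesis
    using periodic_density[of "\<lambda>m. [a * m = 1] (mod n)" n] card_inverses_below[OF assms] assms(2)
    by simp
qed

section \<open>Counting the class L(n) = l\<close>

lemma odd_Lval_iff:
  fixes n l :: nat
  shows "odd n \<and> 0 < n \<and> Lval n = l \<longleftrightarrow> (\<exists>m. odd m \<and> n + 1 = 2 ^ (l + 1) * m)"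
proof
  assume n: "odd n \<and> 0 < n \<and> Lval n = l"
  obtain m where m: "n + 1 = 2 ^ v2 (n + 1) * m" "odd m"
    using multiplicity_decompose'[of "n + 1" 2] unfolding v2_def by auto
  have "v2 (n + 1) \<noteq> 0"
    using m n by (cases "v2 (n + 1)") auto
  then have "v2 (n + 1) = l + 1"
    using n unfolding Lval_def by linarith
  then show "\<exists>m. odd m \<and> n + 1 = 2 ^ (l + 1) * m"
    using m by auto
next
  assume "\<exists>m. odd m \<and> n + 1 = 2 ^ (l + 1) * m"
  then obtain m where m: "odd m" "n + 1 = 2 ^ (l + 1) * m"
    by blast
  have "v2 (n + 1) = l + 1"
    unfolding v2_def by (rule multiplicity_decomposeI[OF m(2)]) (use m(1) in auto)
  moreover have "even (n + 1)"
    using m(2) by simp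
  moreover have "2 * 1 \<le> 2 ^ (l + 1) * m"
    using m(1) by (intro mult_le_mono) (simp_all add: odd_pos Suc_le_eq)
  then have "n > 0"
    using m(2) by linarith
  ultimately show "odd n \<and> 0 < n \<and> Lval n = l"
    unfolding Lval_def by simp
qed

lemma card_Lval_class:
  fixes l N :: nat and R :: "nat \<Rightarrow> bool"
  defines "B \<equiv> (2::nat) ^ (l + 1)"
  shows "card {n \<in> {1..N}. (odd n \<and> 0 < n \<and> Lval n = l) \<and> R n}
       = card {m. m < (N + 1) div B + 1 \<and> odd m \<and> R (B * m - 1)}"
proof -
  have "B \<ge> 2"
    unfolding B_def by (simp add: Suc_le_eq)
  have range: "m < (N + 1) div B + 1 \<longleftrightarrow> B * m \<le> N + 1" for m
    using \<open>B \<ge> 2\<close> by (simp add: less_Suc_eq_le less_eq_div_iff_mult_less_eq mult.commute)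
  have pred: "B * m - 1 + 1 = B * m" if "odd m" for m
    using that \<open>B \<ge> 2\<close> by (simp add: Suc_le_eq odd_pos)
  have "{n \<in> {1..N}. (odd n \<and> 0 < n \<and> Lval n = l) \<and> R n}
      = (\<lambda>m. B * m - 1) ` {m. m < (N + 1) div B + 1 \<and> odd m \<and> R (B * m - 1)}"
  proof (intro equalityI subsetI)
    fix n
    assume n: "n \<in> {n \<in> {1..N}. (odd n \<and> 0 < n \<and> Lval n = l) \<and> R n}"
    then obtain m where "odd m" "n + 1 = B * m"
      using odd_Lval_iff unfolding B_def by blast
    moreover from this have "n = B * m - 1"
      by simp
    ultimately show "n \<in> (\<lambda>m. B * m - 1) ` {m. m < (N + 1) div B + 1 \<and> odd m \<and> R (B * m - 1)}"
      using n range[of m] by (auto intro!: image_eqI[of _ _ m])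
  next
    fix n
    assume "n \<in> (\<lambda>m. B * m - 1) ` {m. m < (N + 1) div B + 1 \<and> odd m \<and> R (B * m - 1)}"
    then obtain m where m: "n = B * m - 1" "B * m \<le> N + 1" "odd m" "R n"
      using range by blast
    then have "n + 1 = B * m"
      using pred by simp
    then show "n \<in> {n \<in> {1..N}. (odd n \<and> 0 < n \<and> Lval n = l) \<and> R n}"
      using m odd_Lval_iff[of n l] unfolding B_def by auto
  qed
  moreover have "inj_on (\<lambda>m. B * m - 1) {m. m < (N + 1) div B + 1 \<and> odd m \<and> R (B * m - 1)}"
    using pred \<open>B \<ge> 2\<close> by (intro inj_onI) (metis mem_Collect_eq mult_left_cancel not_numeral_le_zero)
  ultimately show ?thesis
    by (simp add: card_image)
qed

lemma density_syracuse_descent: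
  fixes k :: nat
  assumes "k > 0"
  defines "J \<equiv> nat \<lfloor>(log 2 3 - 1) * real k\<rfloor> + 1"
  shows "(\<lambda>M. card {m. m < M \<and> odd m \<and> (syracuse ^^ k) (2 ^ k * m - 1) < 2 ^ k * m - 1} / real M)
           \<longlonglongrightarrow> 1 / 2 ^ J"
proof -
  have "J > 0"
    unfolding J_def by simp
  have "odd m \<and> (syracuse ^^ k) (2 ^ k * m - 1) < 2 ^ k * m - 1 \<longleftrightarrow> [3 ^ k * m = 1] (mod 2 ^ J)"
    if "2 ^ J \<le> m" for m
    using syracuse_iterate_lt_iff[OF three_power_between_powers_of_two[OF assms(1), folded J_def] that]
      odd_if_cong_one_mod_power2[of "3 ^ k" m J] \<open>J > 0\<close>
    by blast
  moreover have "(\<lambda>M. card {m. m < M \<and> [3 ^ k * m = 1] (mod 2 ^ J)} / real M) \<longlonglongrightarrow> 1 / 2 ^ J"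
    using density_cong_one[of "3 ^ k" "2 ^ J"] by simp
  ultimately show ?thesis
    by (rule density_eventually_eq)
qed

theorem mainTheorem12:
  fixes l :: nat
  shows "has_rel_density (\<lambda>n. (syracuse ^^ (l + 1)) n < n)
           (\<lambda>n. odd n \<and> 0 < n \<and> Lval n = l)
           (2 powr (- real_of_int \<lfloor>(log 2 3 - 1) * real (l + 1)\<rfloor>))"
proof -
  define k where "k = l + 1"
  define F where "F = \<lfloor>(log 2 3 - 1) * real k\<rfloor>"
  define P where "P = (\<lambda>m. odd m \<and> (syracuse ^^ k) (2 ^ k * m - 1) < 2 ^ k * m - 1)"
  define M where "M = (\<lambda>N::nat. (N + 1) div 2 ^ k + 1)"
  have "(\<lambda>M. card {m. m < M \<and> P m} / real M) \<longlonglongrightarrow> 1 / 2 ^ (nat F + 1)"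
    unfolding P_def F_def by (rule density_syracuse_descent) (simp add: k_def)
  then have "(\<lambda>M. card {m. m < M \<and> P m} / card {m. m < M \<and> odd m})
      \<longlonglongrightarrow> (1 / 2 ^ (nat F + 1)) / (1 / 2)"
    using density_odd by (rule tendsto_ratio_of_densities) simp
  moreover have "filterlim M sequentially sequentially"
    unfolding M_def by (rule filterlim_at_top_mono[OF filterlim_at_top_div_const_nat[of "2 ^ k"]])
      (simp_all add: always_eventually div_le_mono le_SucI)
  ultimately have "(\<lambda>N. card {m. m < M N \<and> P m} / card {m. m < M N \<and> odd m})
      \<longlonglongrightarrow> (1 / 2 ^ (nat F + 1)) / (1 / 2)"
    by (rule filterlim_compose)
  moreover have "0 \<le> F"
    unfolding F_def by (simp add: le_log_iff)
  then have "(1 / 2 ^ (nat F + 1)) / (1 / 2) = 2 powr (- real_of_int F)"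
    by (simp add: field_simps powr_minus powr_realpow flip: of_nat_nat)
  moreover have "card {n \<in> {1..N}. odd n \<and> 0 < n \<and> Lval n = l} = card {m. m < M N \<and> odd m}" for N
    using card_Lval_class[where l = l and N = N and R = "\<lambda>_. True"] unfolding M_def k_def by simp
  ultimately show ?thesis
    unfolding has_rel_density_def card_Lval_class P_def M_def F_def k_def by simp
qed

end
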